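(* Let $\mathcal{X}$ be a countable set and $\pi$ a probability distribution on $\mathcal{X}$. For $i=1,\dots,n$ let $S_i:\mathcal{X}\to\mathcal{X}$ be an involution ($S_i\circ S_i=\mathrm{id}$) which is $\pi$-invariant ($\pi(S_i(A))=\pi(A)$ for all $A\subset\mathcal{X}$), let $P_i$ be a Markov kernel on $\mathcal{X}$, and let $\omega=(\omega_1,\dots,\omega_n):\mathcal{X}\to\Delta^{n-1}$, where $\Delta^{n-1}=\{y\in\mathbb{R}^n: y_i\ge 0,\ \sum_{i=1}^n y_i=1\}$. Define the Markov kernel $\mathcal{K}(x,\cdot)=\sum_{i=1}^n\omega_i(x)P_i(x,\cdot)$. Suppose $\mathcal{K}$ satisfies the mixed skewed balance condition with respect to $\pi$, i.e. for all $x,x'\in\mathcal{X}$ and all $i\in\{1,\dots,n\}$, $$\omega_i(x)\,\pi(x)\,P_i(x,x')=\omega_i(x')\,\pi(x')\,P_i\big(S_i(x'),S_i(x)\big).$$ Then $\pi$ is invariant under $\mathcal{K}$, i.e. $\sum_{x\in\mathcal{X}}\pi(x)\mathcal{K}(x,x')=\pi(x')$ for all $x'\in\mathcal{X}$. *)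

theory Defs
  imports "HOL-Probability.Probability"
begin

definition mix_kernel :: "nat \<Rightarrow> ('a \<Rightarrow> nat \<Rightarrow> real) \<Rightarrow> (nat \<Rightarrow> 'a \<Rightarrow> 'a pmf) \<Rightarrow> 'a \<Rightarrow> 'a \<Rightarrow> real" where
  "mix_kernel n \<omega> P x x' = (\<Sum>i=1..n. \<omega> x i * pmf (P i x) x')"

end

theory Submission
  imports Defs
begin

text \<open>Summing the skewed balance identity for the \<open>i\<close>-th component over \<open>x\<close>, its right-hand
  side becomes \<open>\<omega>\<^sub>i(x') \<pi>(x')\<close> times the total mass of \<open>P\<^sub>i(S\<^sub>i x', \<cdot>)\<close>, reindexed by the
  bijection \<open>S\<^sub>i\<close>; that mass is 1. Summing over \<open>i\<close> and using \<open>\<Sum>\<^sub>i \<omega>\<^sub>i(x') = 1\<close> leaves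
  \<open>\<pi>(x')\<close>.\<close>

lemma has_sum_pmf: "(pmf p has_sum 1) UNIV"
proof -
  have abs_summable: "Infinite_Set_Sum.abs_summable_on (pmf p) UNIV" by blast
  then have "pmf p summable_on UNIV"
    using abs_summable_equivalent abs_summable_summable by blast
  moreover have "infsum (pmf p) UNIV = 1"
    using infsetsum_infsum[OF abs_summable] infsetsum_pmf_eq_1[of p UNIV] by simp
  ultimately show ?thesis
    using has_sum_iff by blast
qed

lemma has_sum_sum:
  fixes f :: "'i \<Rightarrow> 'a \<Rightarrow> 'b::topological_comm_monoid_add"
  assumes "finite I" and "\<And>i. i \<in> I \<Longrightarrow> (f i has_sum s i) A"
  shows "((\<lambda>x. \<Sum>i\<in>I. f i x) has_sum (\<Sum>i\<in>I. s i)) A"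
  using assms
proof (induction I rule: finite_induct)
  case empty
  then show ?case by simp
next
  case (insert j I)
  then have "((\<lambda>x. f j x + (\<Sum>i\<in>I. f i x)) has_sum (s j + (\<Sum>i\<in>I. s i))) A"
    by (intro has_sum_add) auto
  with insert show ?case by simp
qed

lemma has_sum_reindex_involution:
  assumes "\<And>x. g (g x) = x"
  shows "((\<lambda>x. f (g x)) has_sum s) UNIV \<longleftrightarrow> (f has_sum s) UNIV"
proof -
  have "bij_betw g UNIV UNIV"
    by (rule bij_betwI[where g = g]) (use assms in auto)
  then show ?thesis
    by (rule has_sum_reindex_bij_betw)
qed

lemma skewed_balance_has_sum:
  fixes \<pi> :: "'a pmf" and P :: "'a \<Rightarrow> 'a pmf" and w :: "'a \<Rightarrow> real"
  assumes invol: "\<And>x. S (S x) = x"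
    and skewed: "\<And>x. w x * pmf \<pi> x * pmf (P x) x' = w x' * pmf \<pi> x' * pmf (P (S x')) (S x)"
  shows "((\<lambda>x. w x * pmf \<pi> x * pmf (P x) x') has_sum (w x' * pmf \<pi> x')) UNIV"
proof -
  have "((\<lambda>x. pmf (P (S x')) (S x)) has_sum 1) UNIV"
    using has_sum_reindex_involution[of S, OF invol] has_sum_pmf by blast
  then have "((\<lambda>x. w x' * pmf \<pi> x' * pmf (P (S x')) (S x)) has_sum (w x' * pmf \<pi> x' * 1)) UNIV"
    by (rule has_sum_cmult_right)
  then show ?thesis
    by (simp add: skewed)
qed

theorem theorem4p1:
  fixes \<pi> :: "'a::countable pmf"
    and n :: nat
    and S :: "nat \<Rightarrow> 'a \<Rightarrow> 'a"
    and P :: "nat \<Rightarrow> 'a \<Rightarrow> 'a pmf"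
    and \<omega> :: "'a \<Rightarrow> nat \<Rightarrow> real"
  assumes invol: "\<And>i x. i \<in> {1..n} \<Longrightarrow> S i (S i x) = x"
    and S_inv: "\<And>i A. i \<in> {1..n} \<Longrightarrow> measure_pmf.prob \<pi> (S i ` A) = measure_pmf.prob \<pi> A"
    and \<omega>_nonneg: "\<And>x i. i \<in> {1..n} \<Longrightarrow> \<omega> x i \<ge> 0"
    and \<omega>_sum: "\<And>x. (\<Sum>i=1..n. \<omega> x i) = 1"
    and skewed: "\<And>x x' i. i \<in> {1..n} \<Longrightarrow>
       \<omega> x i * pmf \<pi> x * pmf (P i x) x' = \<omega> x' i * pmf \<pi> x' * pmf (P i (S i x')) (S i x)"
  shows "\<And>x'. ((\<lambda>x. pmf \<pi> x * mix_kernel n \<omega> P x x') has_sum pmf \<pi> x') UNIV"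
proof -
  fix x'
  have "((\<lambda>x. \<Sum>i=1..n. \<omega> x i * pmf \<pi> x * pmf (P i x) x') has_sum (\<Sum>i=1..n. \<omega> x' i * pmf \<pi> x')) UNIV"
    by (intro has_sum_sum skewed_balance_has_sum[where S = "S i" for i]) (auto simp: invol skewed)
  moreover have "(\<Sum>i=1..n. \<omega> x' i * pmf \<pi> x') = pmf \<pi> x'"
    using \<omega>_sum[of x'] by (simp flip: sum_distrib_right)
  moreover have "(\<Sum>i=1..n. \<omega> x i * pmf \<pi> x * pmf (P i x) x') = pmf \<pi> x * mix_kernel n \<omega> P x x'" for x
    unfolding mix_kernel_def by (simp add: sum_distrib_left mult_ac)
  ultimately show "((\<lambda>x. pmf \<pi> x * mix_kernel n \<omega> P x x') has_sum pmf \<pi> x') UNIV"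
    by simp
qed

end
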